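(* Let $v\in\mathrm{Box}(\Sigma)$, $\gamma^v$ as in the context, and $l\in\mathbb L$. Then the expression $x^v\prod_{j=1}^n\frac{z_j^{l_j+\gamma^v_j+D_j}}{\Gamma(l_j+\gamma^v_j+D_j+1)}$ vanishes in the completion of $\mathbb C[K,\Sigma]$ unless $l\in\mathcal S_\Sigma(\gamma^v)$.
   Context: $N\cong\mathbb Z^d$ lattice, $\mathcal A=\{v_1,\dots,v_n\}\subset N$ generating $N$ with a homomorphism $\mathrm h:N\to\mathbb Z$, $\mathrm h(v_j)=1$; $\mathbb L=\{l\in\mathbb Z^n:\sum l_jv_j=0\}$; $K=\mathbb R_{\ge0}\mathrm{Conv}(\mathcal A)$; $\Sigma$ the simplicial fan supported on $K$ from a regular triangulation of $\mathrm{Conv}(\mathcal A)$ with vertices in $\mathcal A$. $\mathbb C[K,\Sigma]$: basis $x^w$, $w\in K\cap N$, $x^{w_1}x^{w_2}=x^{w_1+w_2}$ if a cone of $\Sigma$ contains both, else $0$; graded by $\mathrm h$, completed w.r.t. this grading. $\mathrm{Box}(\Sigma)$: $v\in N$ with $v=\sum q^v_jv_j$, $0\le q^v_j<1$, $q^v_j=0$ unless $v_j$ spans a ray of one fixed maximal cone. Fix $\beta\in N$ and $\gamma^v\in\mathbb Q^n$ with $\sum\gamma^v_jv_j=\beta$, $\gamma^v_j-q^v_j\in\mathbb Z$. $D_j=x^{v_j}$ if $\mathbb R_{\ge0}v_j\in\Sigma$, else $D_j=0$; the factors $z_j^{a+D_j}/\Gamma(a+D_j+1)$ are understood as power series in $D_j$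 (Taylor expansion of $s\mapsto z_j^s/\Gamma(s+1)$ at $s=a$), $z_j\in\mathbb C^*$ with a chosen argument. For $\gamma\in\mathbb Q^n$ and $l\in\mathbb L$, $\mathrm{Supp}(l)=\{v_j:l_j+\gamma_j\notin\mathbb Z_{\ge0}\}$, and $\mathcal S_\Sigma(\gamma)$ is the set of $l\in\mathbb L$ such that all elements of $\mathrm{Supp}(l)$ generate rays of a single maximal cone of $\Sigma$. *)

theory Defs
  imports "HOL-Analysis.Analysis"
begin

text \<open>Lattice N = Z^d is modelled as int^'d; the vectors v_1..v_n as v 0 .. v (n-1).
  A subset of indices sigma stands for the cone spanned by the v_j, j in sigma.\<close>

definition rv :: "int^'d \<Rightarrow> real^'d" where
  "rv w = (\<chi> i. real_of_int (w $ i))"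

definition Kcone :: "(nat \<Rightarrow> int^'d) \<Rightarrow> nat \<Rightarrow> (real^'d) set" where
  "Kcone v n = {x. \<exists>c::nat \<Rightarrow> real. (\<forall>j. 0 \<le> c j) \<and> x = (\<Sum>j<n. c j *\<^sub>R rv (v j))}"

definition conegen :: "(nat \<Rightarrow> int^'d) \<Rightarrow> nat set \<Rightarrow> (real^'d) set" where
  "conegen v \<sigma> = {x. \<exists>c::nat \<Rightarrow> real. (\<forall>j. 0 \<le> c j) \<and> x = (\<Sum>j\<in>\<sigma>. c j *\<^sub>R rv (v j))}"

text \<open>T is the set of maximal simplices (index sets) of a regular triangulation of Conv(A)
  with vertices in A: induced by a height function omega (cells = lower faces of the lifted
  point configuration), all maximal cells being simplices which cover Conv(A). Since all v_j lie
  on the hyperplane h = 1, affine functions on it are restrictions of linear functionals p.\<close>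
definition regular_triangulation :: "(nat \<Rightarrow> int^'d) \<Rightarrow> nat \<Rightarrow> nat set set \<Rightarrow> bool" where
  "regular_triangulation v n T \<longleftrightarrow>
     (\<exists>\<omega>::nat \<Rightarrow> real. T = {\<sigma>. \<sigma> \<subseteq> {..<n}
          \<and> independent ((\<lambda>j. rv (v j)) ` \<sigma>)
          \<and> card ((\<lambda>j. rv (v j)) ` \<sigma>) = CARD('d)
          \<and> (\<exists>p::real^'d. (\<forall>j\<in>\<sigma>. p \<bullet> rv (v j) = \<omega> j)
                          \<and> (\<forall>j\<in>{..<n} - \<sigma>. p \<bullet> rv (v j) < \<omega> j))})
     \<and> (\<Union>\<sigma>\<in>T. conegen v \<sigma>) = Kcone v n"

definition is_ray :: "nat set set \<Rightarrow> nat \<Rightarrow> bool" where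
  "is_ray T j \<longleftrightarrow> (\<exists>\<sigma>\<in>T. j \<in> \<sigma>)"

text \<open>Elements of the completion of C[K,Sigma] (w.r.t. the h-grading): arbitrary coefficient
  functions on K \<inter> N (formal infinite sums of x^w).\<close>
type_synonym 'd ring_elt = "int^'d \<Rightarrow> complex"

definition inK :: "(nat \<Rightarrow> int^'d) \<Rightarrow> nat \<Rightarrow> int^'d \<Rightarrow> bool" where
  "inK v n w \<longleftrightarrow> rv w \<in> Kcone v n"

definition samecone :: "(nat \<Rightarrow> int^'d) \<Rightarrow> nat set set \<Rightarrow> int^'d \<Rightarrow> int^'d \<Rightarrow> bool" where
  "samecone v T w1 w2 \<longleftrightarrow> (\<exists>\<sigma>\<in>T. rv w1 \<in> conegen v \<sigma> \<and> rv w2 \<in> conegen v \<sigma>)"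

definition xmon :: "int^'d \<Rightarrow> 'd ring_elt" where
  "xmon u = (\<lambda>w. if w = u then 1 else 0)"

text \<open>multiplication: x^{w1} x^{w2} = x^{w1+w2} if a cone of Sigma contains both, else 0
  (each coefficient is a finite sum since K is pointed and graded by h).\<close>
definition rmult :: "(nat \<Rightarrow> int^'d) \<Rightarrow> nat \<Rightarrow> nat set set \<Rightarrow> 'd ring_elt \<Rightarrow> 'd ring_elt \<Rightarrow> 'd ring_elt" where
  "rmult v n T f g = (\<lambda>w. \<Sum>w1\<in>{w1. inK v n w1 \<and> inK v n (w - w1) \<and> samecone v T w1 (w - w1)}.
                           f w1 * g (w - w1))"

definition rpow :: "(nat \<Rightarrow> int^'d) \<Rightarrow> nat \<Rightarrow> nat set set \<Rightarrow> 'd ring_elt \<Rightarrow> nat \<Rightarrow> 'd ring_elt" where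
  "rpow v n T D k = (rmult v n T D ^^ k) (xmon 0)"

definition pseries :: "(nat \<Rightarrow> int^'d) \<Rightarrow> nat \<Rightarrow> nat set set \<Rightarrow> (nat \<Rightarrow> complex) \<Rightarrow> 'd ring_elt \<Rightarrow> 'd ring_elt" where
  "pseries v n T c D = (\<lambda>w. \<Sum>k. c k * rpow v n T D k w)"

definition Dj :: "(nat \<Rightarrow> int^'d) \<Rightarrow> nat set set \<Rightarrow> nat \<Rightarrow> 'd ring_elt" where
  "Dj v T j = (if is_ray T j then xmon (v j) else (\<lambda>_. 0))"

text \<open>k-th Taylor coefficient at s = a of s \<mapsto> z^s / Gamma(s+1), where z^s = exp(s * L)
  with L a chosen logarithm of z (chosen argument).\<close>
definition taylor_coeff :: "complex \<Rightarrow> complex \<Rightarrow> nat \<Rightarrow> complex" where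
  "taylor_coeff L a k = (deriv ^^ k) (\<lambda>s. exp (s * L) * rGamma (s + 1)) a / fact k"

text \<open>x^v prod_j z_j^{a_j + D_j} / Gamma(a_j + D_j + 1)\<close>
definition gamma_expr :: "(nat \<Rightarrow> int^'d) \<Rightarrow> nat \<Rightarrow> nat set set \<Rightarrow> (nat \<Rightarrow> complex)
    \<Rightarrow> (nat \<Rightarrow> rat) \<Rightarrow> int^'d \<Rightarrow> 'd ring_elt" where
  "gamma_expr v n T L a u =
     foldl (\<lambda>acc j. rmult v n T acc (pseries v n T (taylor_coeff (L j) (of_rat (a j))) (Dj v T j)))
           (xmon u) [0..<n]"

definition relations :: "(nat \<Rightarrow> int^'d) \<Rightarrow> nat \<Rightarrow> (nat \<Rightarrow> int) set" where
  "relations v n = {l. \<forall>i. (\<Sum>j<n. l j * v j $ i) = 0}"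

definition Supp :: "nat \<Rightarrow> (nat \<Rightarrow> rat) \<Rightarrow> (nat \<Rightarrow> int) \<Rightarrow> nat set" where
  "Supp n \<gamma> l = {j. j < n \<and> \<not> (\<exists>m::nat. of_int (l j) + \<gamma> j = of_nat m)}"

definition S_Sigma :: "(nat \<Rightarrow> int^'d) \<Rightarrow> nat \<Rightarrow> nat set set \<Rightarrow> (nat \<Rightarrow> rat) \<Rightarrow> (nat \<Rightarrow> int) set" where
  "S_Sigma v n T \<gamma> = {l \<in> relations v n. \<exists>\<sigma>\<in>T. Supp n \<gamma> l \<subseteq> \<sigma>}"

end

theory Submission
  imports Defs
begin

text \<open>Expanding the product, a monomial \<open>x\<^sup>w\<close> can only occur if
  \<open>w = v + \<Sum>\<^sub>j k\<^sub>j v\<^sub>j\<close>, where the \<open>k\<^sub>j\<close>-th Taylor coefficient of the \<open>j\<close>-th factor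
  is nonzero and every partial sum lies in a common cone of \<open>\<Sigma>\<close> with the next summand
  \<open>k\<^sub>j v\<^sub>j\<close>. When \<open>l\<^sub>j + \<gamma>\<^sub>j\<close> is a negative integer the constant coefficient
  \<open>1/\<Gamma>(l\<^sub>j + \<gamma>\<^sub>j + 1)\<close> vanishes, so \<open>k\<^sub>j > 0\<close>.
  Comparing with the height function of the regular triangulation shows that a point of a cone
  \<open>\<sigma>\<close> that is a nonnegative combination of the generators of some cell is in fact a combination
  of generators of \<open>\<sigma>\<close>. Inductively, every partial sum is thus a nonnegative combination of the
  generators of a single cell, with positive coefficients at all \<open>j\<close> with \<open>q\<^sub>j > 0\<close> or
  \<open>k\<^sub>j > 0\<close>. Every index of \<open>Supp(l)\<close> is of one of these kinds, so \<open>l \<in> S\<^sub>\<Sigma>(\<gamma>)\<close>.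
  This is a pure support argument: the grading \<open>h\<close>, the values \<open>z\<^sub>j\<close> and \<open>\<beta>\<close>, and the fact
  that \<open>\<A>\<close> generates \<open>N\<close> play no role.\<close>

lemma rv_add: "rv (a + b) = rv a + rv b"
  by (simp add: rv_def vec_eq_iff)

lemma rv_scalar_mult: "rv (int k *s u) = real k *\<^sub>R rv u"
  by (simp add: rv_def vec_eq_iff)

definition lower_face ::
    "(nat \<Rightarrow> int^'d) \<Rightarrow> nat \<Rightarrow> (nat \<Rightarrow> real) \<Rightarrow> nat set \<Rightarrow> real^'d \<Rightarrow> bool" where
  "lower_face v n \<omega> \<sigma> p \<longleftrightarrow>
     (\<forall>j\<in>\<sigma>. p \<bullet> rv (v j) = \<omega> j) \<and> (\<forall>j\<in>{..<n} - \<sigma>. p \<bullet> rv (v j) < \<omega> j)"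

lemma lower_face_le_height: "lower_face v n \<omega> \<sigma> p \<Longrightarrow> i < n \<Longrightarrow> p \<bullet> rv (v i) \<le> \<omega> i"
  unfolding lower_face_def by (cases "i \<in> \<sigma>") force+

lemma inner_combination_le_heights:
  fixes v :: "nat \<Rightarrow> int^'d"
  assumes "lower_face v n \<omega> \<sigma> p" and "\<forall>i. 0 \<le> a i"
  shows "p \<bullet> (\<Sum>i<n. a i *\<^sub>R rv (v i)) \<le> (\<Sum>i<n. a i * \<omega> i)"
  using assms(2) lower_face_le_height[OF assms(1)]
  by (auto simp: inner_sum_right intro!: sum_mono mult_left_mono)

lemma inner_combination_eq_heights_iff:
  fixes v :: "nat \<Rightarrow> int^'d"
  assumes face: "lower_face v n \<omega> \<sigma> p" and nonneg: "\<forall>i. 0 \<le> a i"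
  shows "p \<bullet> (\<Sum>i<n. a i *\<^sub>R rv (v i)) = (\<Sum>i<n. a i * \<omega> i)
           \<longleftrightarrow> (\<forall>i<n. 0 < a i \<longrightarrow> i \<in> \<sigma>)"
proof
  assume eq: "p \<bullet> (\<Sum>i<n. a i *\<^sub>R rv (v i)) = (\<Sum>i<n. a i * \<omega> i)"
  show "\<forall>i<n. 0 < a i \<longrightarrow> i \<in> \<sigma>"
  proof (rule ccontr)
    assume "\<not> (\<forall>i<n. 0 < a i \<longrightarrow> i \<in> \<sigma>)"
    then obtain i0 where i0: "i0 < n" "0 < a i0" "i0 \<notin> \<sigma>" by blast
    have "(\<Sum>i<n. a i * (p \<bullet> rv (v i))) < (\<Sum>i<n. a i * \<omega> i)"
    proof (rule sum_strict_mono_ex1)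
      show "\<forall>i\<in>{..<n}. a i * (p \<bullet> rv (v i)) \<le> a i * \<omega> i"
        using nonneg lower_face_le_height[OF face] by (auto intro: mult_left_mono)
      show "\<exists>i\<in>{..<n}. a i * (p \<bullet> rv (v i)) < a i * \<omega> i"
        using i0 face by (intro bexI[of _ i0]) (auto simp: lower_face_def)
    qed simp
    with eq show False by (simp add: inner_sum_right)
  qed
next
  assume supp: "\<forall>i<n. 0 < a i \<longrightarrow> i \<in> \<sigma>"
  have "a i * (p \<bullet> rv (v i)) = a i * \<omega> i" if "i < n" for i
    using supp face nonneg[rule_format, of i] that
    by (cases "0 < a i") (auto simp: lower_face_def)
  then have "(\<Sum>i<n. a i * (p \<bullet> rv (v i))) = (\<Sum>i<n. a i * \<omega> i)"
    by (intro sum.cong) auto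
  then show "p \<bullet> (\<Sum>i<n. a i *\<^sub>R rv (v i)) = (\<Sum>i<n. a i * \<omega> i)"
    by (simp add: inner_sum_right)
qed

lemma regular_triangulation_heights:
  assumes "regular_triangulation v n T"
  obtains \<omega> where "\<And>\<sigma>. \<sigma> \<in> T \<Longrightarrow> \<sigma> \<subseteq> {..<n} \<and> (\<exists>p. lower_face v n \<omega> \<sigma> p)"
  using assms unfolding regular_triangulation_def lower_face_def by blast

definition cell_combination ::
    "(nat \<Rightarrow> int^'d) \<Rightarrow> nat \<Rightarrow> nat set \<Rightarrow> (nat \<Rightarrow> real) \<Rightarrow> real^'d \<Rightarrow> bool" where
  "cell_combination v n \<sigma> a x \<longleftrightarrow>
     (\<forall>i. 0 \<le> a i) \<and> (\<forall>i<n. 0 < a i \<longrightarrow> i \<in> \<sigma>) \<and> x = (\<Sum>i<n. a i *\<^sub>R rv (v i))"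

lemma conegen_imp_cell_combination:
  assumes "\<sigma> \<subseteq> {..<n}" and "x \<in> conegen v \<sigma>"
  obtains c where "cell_combination v n \<sigma> c x"
proof -
  from assms(2) obtain c where c: "\<forall>j. 0 \<le> c j" "x = (\<Sum>j\<in>\<sigma>. c j *\<^sub>R rv (v j))"
    unfolding conegen_def by blast
  have "(\<Sum>j<n. (if j \<in> \<sigma> then c j else 0) *\<^sub>R rv (v j)) = (\<Sum>j\<in>{..<n} \<inter> \<sigma>. c j *\<^sub>R rv (v j))"
    by (simp add: sum.inter_restrict if_distrib[of "\<lambda>t. t *\<^sub>R _"] cong: if_cong)
  also have "{..<n} \<inter> \<sigma> = \<sigma>" using assms(1) by blast
  finally have "cell_combination v n \<sigma> (\<lambda>j. if j \<in> \<sigma> then c j else 0) x"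
    using c by (simp add: cell_combination_def)
  then show thesis
    by (rule that)
qed

lemma cell_combination_in_cone_cell:
  assumes fan: "regular_triangulation v n T" and "\<sigma> \<in> T" "\<sigma>' \<in> T"
    and x: "x \<in> conegen v \<sigma>" and a: "cell_combination v n \<sigma>' a x"
  shows "cell_combination v n \<sigma> a x"
proof -
  obtain \<omega> where heights: "\<And>\<sigma>. \<sigma> \<in> T \<Longrightarrow> \<sigma> \<subseteq> {..<n} \<and> (\<exists>p. lower_face v n \<omega> \<sigma> p)"
    using regular_triangulation_heights[OF fan] by blast
  obtain p where p: "lower_face v n \<omega> \<sigma> p" and \<sigma>n: "\<sigma> \<subseteq> {..<n}"
    using heights \<open>\<sigma> \<in> T\<close> by blast
  obtain p' where p': "lower_face v n \<omega> \<sigma>' p'"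
    using heights \<open>\<sigma>' \<in> T\<close> by blast
  obtain c where c: "cell_combination v n \<sigma> c x"
    using conegen_imp_cell_combination[OF \<sigma>n x] .
  have "p' \<bullet> x = (\<Sum>i<n. a i * \<omega> i)"
    using a inner_combination_eq_heights_iff[OF p'] by (simp add: cell_combination_def)
  moreover have "p' \<bullet> x \<le> (\<Sum>i<n. c i * \<omega> i)"
    using c inner_combination_le_heights[OF p'] by (simp add: cell_combination_def)
  moreover have "p \<bullet> x = (\<Sum>i<n. c i * \<omega> i)"
    using c inner_combination_eq_heights_iff[OF p] by (simp add: cell_combination_def)
  moreover have "p \<bullet> x \<le> (\<Sum>i<n. a i * \<omega> i)"
    using a inner_combination_le_heights[OF p] by (simp add: cell_combination_def)
  ultimately have "p \<bullet> x = (\<Sum>i<n. a i * \<omega> i)"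
    by linarith
  then show ?thesis
    using a inner_combination_eq_heights_iff[OF p] by (simp add: cell_combination_def)
qed

lemma cell_combination_add:
  assumes "cell_combination v n \<sigma> a x" and "cell_combination v n \<sigma> b y"
  shows "cell_combination v n \<sigma> (\<lambda>i. a i + b i) (x + y)"
proof -
  have "0 < a i + b i \<Longrightarrow> 0 \<le> a i \<Longrightarrow> 0 \<le> b i \<Longrightarrow> 0 < a i \<or> 0 < b i" for i
    by linarith
  then show ?thesis
    using assms by (auto simp: cell_combination_def scaleR_add_left sum.distrib)
qed

lemma cell_combination_generator:
  assumes "j \<in> \<sigma>" and "j < n" and "0 \<le> t"
  shows "cell_combination v n \<sigma> (\<lambda>i. if i = j then t else 0) (t *\<^sub>R rv (v j))"
proof -
  have "(\<Sum>i<n. (if i = j then t else 0) *\<^sub>R rv (v i)) = t *\<^sub>R rv (v j)"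
    using assms(2) by (simp add: if_distrib[of "\<lambda>s. s *\<^sub>R _"] cong: if_cong)
  then show ?thesis
    using assms by (auto simp: cell_combination_def)
qed

definition cell_positive ::
    "(nat \<Rightarrow> int^'d) \<Rightarrow> nat \<Rightarrow> nat set set \<Rightarrow> nat set \<Rightarrow> int^'d \<Rightarrow> bool" where
  "cell_positive v n T F w \<longleftrightarrow>
     (\<exists>\<sigma>\<in>T. \<exists>a. cell_combination v n \<sigma> a (rv w) \<and> (\<forall>i\<in>F. 0 < a i))"

lemma cell_positive_mono: "cell_positive v n T F w \<Longrightarrow> F' \<subseteq> F \<Longrightarrow> cell_positive v n T F' w"
  unfolding cell_positive_def by blast

lemma cell_positive_imp_subset_cell:
  assumes "cell_positive v n T F w" and "F \<subseteq> {..<n}"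
  shows "\<exists>\<sigma>\<in>T. F \<subseteq> \<sigma>"
  using assms unfolding cell_positive_def cell_combination_def by blast

lemma cell_positive_add_generator:
  assumes fan: "regular_triangulation v n T"
    and w: "cell_positive v n T F w"
    and same: "samecone v T w (int k *s v j)"
    and j: "j < n" and ray: "is_ray T j" and k: "0 < k"
  shows "cell_positive v n T (insert j F) (w + int k *s v j)"
proof -
  obtain \<sigma>' a where "\<sigma>' \<in> T" and a: "cell_combination v n \<sigma>' a (rv w)" and aF: "\<forall>i\<in>F. 0 < a i"
    using w unfolding cell_positive_def by blast
  obtain \<sigma> where "\<sigma> \<in> T" and w_cone: "rv w \<in> conegen v \<sigma>"
    and kj_cone: "rv (int k *s v j) \<in> conegen v \<sigma>"
    using same unfolding samecone_def by blast
  obtain \<tau> where "\<tau> \<in> T" "j \<in> \<tau>"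
    using ray unfolding is_ray_def by blast
  define b where "b = (\<lambda>i. if i = j then real k else 0)"
  have "cell_combination v n \<tau> b (rv (int k *s v j))"
    unfolding b_def rv_scalar_mult by (rule cell_combination_generator) (use \<open>j \<in> \<tau>\<close> j in auto)
  then have b: "cell_combination v n \<sigma> b (rv (int k *s v j))"
    by (rule cell_combination_in_cone_cell[OF fan \<open>\<sigma> \<in> T\<close> \<open>\<tau> \<in> T\<close> kj_cone])
  have "cell_combination v n \<sigma> a (rv w)"
    by (rule cell_combination_in_cone_cell[OF fan \<open>\<sigma> \<in> T\<close> \<open>\<sigma>' \<in> T\<close> w_cone a])
  from cell_combination_add[OF this b]
  have ab: "cell_combination v n \<sigma> (\<lambda>i. a i + b i) (rv (w + int k *s v j))"
    by (simp add: rv_add)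
  have "\<forall>i\<in>insert j F. 0 < a i + b i"
    using a b aF k by (auto simp: cell_combination_def b_def add_pos_nonneg add_nonneg_pos)
  with ab \<open>\<sigma> \<in> T\<close> show ?thesis
    unfolding cell_positive_def by blast
qed

lemma rmult_nonzero_imp:
  assumes "rmult v n T f g w \<noteq> 0"
  obtains w1 where "f w1 \<noteq> 0" "g (w - w1) \<noteq> 0" "samecone v T w1 (w - w1)"
  using assms unfolding rmult_def by (metis (no_types, lifting) mem_Collect_eq mult_eq_0_iff sum.neutral)

lemma rpow_Dj_nonzero_imp:
  assumes "rpow v n T (Dj v T j) k w \<noteq> 0"
  shows "w = int k *s v j \<and> (k \<noteq> 0 \<longrightarrow> is_ray T j)"
  using assms
proof (induction k arbitrary: w)
  case 0
  then show ?case by (auto simp: rpow_def xmon_def vec_eq_iff split: if_splits)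
next
  case (Suc k)
  have "rmult v n T (Dj v T j) (rpow v n T (Dj v T j) k) w \<noteq> 0"
    using Suc.prems by (simp add: rpow_def)
  then obtain w1 where "Dj v T j w1 \<noteq> 0" and "rpow v n T (Dj v T j) k (w - w1) \<noteq> 0"
    by (rule rmult_nonzero_imp)
  moreover from \<open>Dj v T j w1 \<noteq> 0\<close> have "is_ray T j" and "w1 = v j"
    by (auto simp: Dj_def xmon_def split: if_splits)
  ultimately have "w - v j = int k *s v j" and "is_ray T j"
    using Suc.IH by auto
  then show ?case
    by (auto simp: vec_eq_iff algebra_simps)
qed

lemma pseries_Dj_nonzero_imp:
  assumes "pseries v n T c (Dj v T j) w \<noteq> 0"
  obtains k where "c k \<noteq> 0" "w = int k *s v j" "k \<noteq> 0 \<longrightarrow> is_ray T j"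
proof -
  have "\<exists>k. c k * rpow v n T (Dj v T j) k w \<noteq> 0"
  proof (rule ccontr)
    assume "\<nexists>k. c k * rpow v n T (Dj v T j) k w \<noteq> 0"
    then have "(\<lambda>k. c k * rpow v n T (Dj v T j) k w) = (\<lambda>_. 0)"
      by auto
    with assms show False
      by (simp add: pseries_def)
  qed
  then obtain k where "c k \<noteq> 0" and "rpow v n T (Dj v T j) k w \<noteq> 0"
    by auto
  then show thesis
    using that rpow_Dj_nonzero_imp by blast
qed

definition series_product :: "(nat \<Rightarrow> int^'d) \<Rightarrow> nat \<Rightarrow> nat set set
    \<Rightarrow> (nat \<Rightarrow> nat \<Rightarrow> complex) \<Rightarrow> int^'d \<Rightarrow> nat list \<Rightarrow> 'd ring_elt" where
  "series_product v n T c u js =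
     foldl (\<lambda>acc j. rmult v n T acc (pseries v n T (c j) (Dj v T j))) (xmon u) js"

lemma series_product_nonzero_imp_cell_positive:
  assumes fan: "regular_triangulation v n T"
    and start: "cell_positive v n T F u"
    and vanish: "\<And>j. j \<in> Z \<Longrightarrow> c j 0 = 0"
    and js: "set js \<subseteq> {..<n}"
    and nz: "series_product v n T c u js w \<noteq> 0"
  shows "cell_positive v n T (F \<union> (set js \<inter> Z)) w"
  using js nz
proof (induction js arbitrary: w rule: rev_induct)
  case Nil
  then show ?case
    using start by (simp add: series_product_def xmon_def split: if_splits)
next
  case (snoc j js)
  have "rmult v n T (series_product v n T c u js) (pseries v n T (c j) (Dj v T j)) w \<noteq> 0"
    using snoc.prems(2) by (simp add: series_product_def)
  then obtain w1 where w1: "series_product v n T c u js w1 \<noteq> 0"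
    and factor: "pseries v n T (c j) (Dj v T j) (w - w1) \<noteq> 0"
    and same: "samecone v T w1 (w - w1)"
    by (rule rmult_nonzero_imp)
  obtain k where ck: "c j k \<noteq> 0" and wk: "w - w1 = int k *s v j"
    and ray: "k \<noteq> 0 \<longrightarrow> is_ray T j"
    using pseries_Dj_nonzero_imp[OF factor] by blast
  have IH: "cell_positive v n T (F \<union> (set js \<inter> Z)) w1"
    using snoc.IH snoc.prems(1) w1 by simp
  have w: "w = w1 + int k *s v j"
    using wk by (simp add: algebra_simps)
  show ?case
  proof (cases "k = 0")
    case True
    with ck vanish have "j \<notin> Z" by blast
    moreover have "w = w1"
      using w True by (simp add: vec_eq_iff)
    ultimately show ?thesis
      using IH by simp
  next
    case False
    have "cell_positive v n T (insert j (F \<union> (set js \<inter> Z))) w"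
      unfolding w using fan IH same wk snoc.prems(1) ray False
      by (intro cell_positive_add_generator) auto
    then show ?thesis
      by (rule cell_positive_mono) auto
  qed
qed

lemma taylor_coeff_0_neg_int:
  assumes "m < 0"
  shows "taylor_coeff L (of_int m) 0 = 0"
proof -
  have "(of_int (m + 1) :: complex) \<in> \<int>\<^sub>\<le>\<^sub>0"
    using assms by (intro nonpos_Ints_of_int) simp
  then show ?thesis
    by (simp add: taylor_coeff_def rGamma_eq_zero_iff)
qed

lemma box_cell_positive:
  fixes q :: "nat \<Rightarrow> rat"
  assumes "\<sigma>0 \<in> T" and q_nonneg: "\<forall>j. 0 \<le> q j" and q_supp: "\<forall>j<n. j \<notin> \<sigma>0 \<longrightarrow> q j = 0"
    and u: "\<forall>i. of_int (u $ i) = (\<Sum>j<n. q j * of_int (v j $ i))"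
  shows "cell_positive v n T {j. j < n \<and> 0 < q j} u"
proof -
  have "rv u = (\<Sum>j<n. real_of_rat (q j) *\<^sub>R rv (v j))"
  unfolding vec_eq_iff
  proof
    fix i
    have "real_of_int (u $ i) = of_rat (\<Sum>j<n. q j * of_int (v j $ i))"
      using u by (metis of_rat_of_int_eq)
    then show "rv u $ i = (\<Sum>j<n. real_of_rat (q j) *\<^sub>R rv (v j)) $ i"
      by (simp add: rv_def sum_component of_rat_sum of_rat_mult)
  qed
  then have "cell_combination v n \<sigma>0 (\<lambda>j. real_of_rat (q j)) (rv u)"
    using q_nonneg q_supp by (auto simp: cell_combination_def)
  then show ?thesis
    using \<open>\<sigma>0 \<in> T\<close> unfolding cell_positive_def by force
qed

lemma Supp_subset_fractional_or_negative:
  fixes \<gamma> q :: "nat \<Rightarrow> rat"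
  assumes "\<forall>j<n. \<gamma> j - q j \<in> \<int>" and "\<forall>j. 0 \<le> q j"
  shows "Supp n \<gamma> l \<subseteq> {j. j < n \<and> 0 < q j}
           \<union> {j. j < n \<and> (\<exists>m::int. m < 0 \<and> of_int (l j) + \<gamma> j = of_int m)}"
    (is "_ \<subseteq> ?fractional \<union> ?negative")
proof
  fix j assume j: "j \<in> Supp n \<gamma> l"
  then have "j < n" and not_nat: "\<nexists>m::nat. of_int (l j) + \<gamma> j = of_nat m"
    by (auto simp: Supp_def)
  show "j \<in> ?fractional \<union> ?negative"
  proof (cases "of_int (l j) + \<gamma> j \<in> \<int>")
    case True
    then obtain m :: int where m: "of_int (l j) + \<gamma> j = of_int m"
      by (metis Ints_cases)
    with not_nat have "m < 0"
      by (metis linorder_not_less of_int_of_nat_eq nonneg_int_cases)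
    with m \<open>j < n\<close> show ?thesis by blast
  next
    case False
    have "q j \<notin> \<int>"
    proof
      assume "q j \<in> \<int>"
      then have "of_int (l j) + ((\<gamma> j - q j) + q j) \<in> \<int>"
        using assms(1) \<open>j < n\<close> by (intro Ints_add) auto
      with False show False by simp
    qed
    then have "0 < q j"
      using assms(2) by (metis Ints_0 order_le_less)
    with \<open>j < n\<close> show ?thesis by blast
  qed
qed

theorem proposition2p5:
  fixes v :: "nat \<Rightarrow> int^'d" and n :: nat and h :: "int^'d \<Rightarrow> int"
    and T :: "nat set set"
    and vb :: "int^'d" and \<sigma>0 :: "nat set" and q :: "nat \<Rightarrow> rat"
    and \<beta> :: "int^'d" and \<gamma> :: "nat \<Rightarrow> rat"
    and z :: "nat \<Rightarrow> complex" and L :: "nat \<Rightarrow> complex"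
    and l :: "nat \<Rightarrow> int"
  assumes inj: "inj_on v {..<n}"
    and gen: "\<forall>w::int^'d. \<exists>c::nat \<Rightarrow> int. \<forall>i. w $ i = (\<Sum>j<n. c j * v j $ i)"
    and h_add: "\<forall>a b. h (a + b) = h a + h b"
    and h_one: "\<forall>j<n. h (v j) = 1"
    and fan: "regular_triangulation v n T"
    and box_cone: "\<sigma>0 \<in> T"
    and box_q: "\<forall>j. 0 \<le> q j \<and> q j < 1"
    and box_supp: "\<forall>j<n. j \<notin> \<sigma>0 \<longrightarrow> q j = 0"
    and box_sum: "\<forall>i. of_int (vb $ i) = (\<Sum>j<n. q j * of_int (v j $ i))"
    and gamma_sum: "\<forall>i. (\<Sum>j<n. \<gamma> j * of_int (v j $ i)) = of_int (\<beta> $ i)"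
    and gamma_int: "\<forall>j<n. \<gamma> j - q j \<in> \<int>"
    and z_nz: "\<forall>j<n. z j \<noteq> 0"
    and arg: "\<forall>j<n. exp (L j) = z j"
    and l_rel: "l \<in> relations v n"
    and notS: "l \<notin> S_Sigma v n T \<gamma>"
  shows "gamma_expr v n T L (\<lambda>j. of_int (l j) + \<gamma> j) vb = (\<lambda>_. 0)"
proof (rule ext, rule ccontr)
  fix w
  define F where "F = {j. j < n \<and> 0 < q j}"
  define Z where "Z = {j. j < n \<and> (\<exists>m::int. m < 0 \<and> of_int (l j) + \<gamma> j = of_int m)}"
  define c where "c = (\<lambda>j. taylor_coeff (L j) (of_rat (of_int (l j) + \<gamma> j)))"
  have start: "cell_positive v n T F vb"
    unfolding F_def using box_cone box_q box_supp box_sum by (intro box_cell_positive) auto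
  have vanish: "c j 0 = 0" if "j \<in> Z" for j
  proof -
    from that obtain m :: int where "m < 0" and m: "of_int (l j) + \<gamma> j = of_int m"
      unfolding Z_def by blast
    then show ?thesis
      by (simp add: c_def m taylor_coeff_0_neg_int)
  qed
  assume "gamma_expr v n T L (\<lambda>j. of_int (l j) + \<gamma> j) vb w \<noteq> 0"
  then have "series_product v n T c vb [0..<n] w \<noteq> 0"
    by (simp add: gamma_expr_def series_product_def c_def)
  then have "cell_positive v n T (F \<union> (set [0..<n] \<inter> Z)) w"
    by (rule series_product_nonzero_imp_cell_positive[OF fan start, rotated 2]) (auto intro: vanish)
  moreover have "set [0..<n] \<inter> Z = Z"
    by (auto simp: Z_def)
  ultimately have "cell_positive v n T (F \<union> Z) w"
    by simp
  then obtain \<sigma> where "\<sigma> \<in> T" and "F \<union> Z \<subseteq> \<sigma>"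
    using cell_positive_imp_subset_cell by (force simp: F_def Z_def)
  moreover have "Supp n \<gamma> l \<subseteq> F \<union> Z"
    unfolding F_def Z_def using gamma_int box_q by (intro Supp_subset_fractional_or_negative) auto
  ultimately have "l \<in> S_Sigma v n T \<gamma>"
    using l_rel by (auto simp: S_Sigma_def)
  with notS show False by contradiction
qed

end
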